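(* Let $d\ge3$, $h\ge1$ and $0\le n\le h-1$. Then $$|G_{n+1}(d,h)/G_n(d,h)|=\begin{cases}\theta(d,h+1)^{d-1} & \text{if } n=0,\\ \theta(d,h+1-n)^{(d-2)d(d-1)^{n-1}} & \text{if } 1\le n\le h-1,\end{cases}$$ where $\theta(d,m):=\frac{(d-1)^m-1}{d-2}$.
   Context: Let $\mathcal{T}(d,h)$ be the rooted tree in which the root $0$ has $d$ children, every vertex at distance $1,\dots,h-1$ from the root has $d-1$ children, and the vertices at distance $h$ are leaves. Let $V$ be its vertex set, $A$ its adjacency matrix, $\Delta := dI-A$, and $\Lambda\subset\mathbb{Z}^V$ the lattice spanned by the rows of $\Delta$. Then $G(d,h):=\mathbb{Z}^V/\Lambda$; $\{\mathbf{x}_i:i\in V\}$ is the standard basis of $\mathbb{Z}^V$ and $\bar{\mathbf{x}}_i$ is the image of $\mathbf{x}_i$ in $G(d,h)$. For $0\le m\le h$, $G_m(d,h)$ is the subgroup of $G(d,h)$ generated by $\{\bar{\mathbf{x}}_i : i \text{ at distance}\le m\text{ from the root}\}$. *)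

theory Defs
  imports "HOL-Algebra.Algebra"
begin

text \<open>Vertices of the tree T(d,h) are encoded as lists: the root is the empty list,
  the children of the root are [a] with a < d, and the children of a non-root
  vertex xs are xs @ [b] with b < d - 1. The depth of a vertex is its length.\<close>

definition tree_V :: "nat \<Rightarrow> nat \<Rightarrow> nat list set" where
  "tree_V d h = {xs. length xs \<le> h \<and> (xs \<noteq> [] \<longrightarrow> hd xs < d)
                     \<and> (\<forall>b \<in> set (tl xs). b < d - 1)}"

definition tree_adj :: "nat \<Rightarrow> nat \<Rightarrow> nat list \<Rightarrow> nat list \<Rightarrow> bool" where
  "tree_adj d h xs ys \<longleftrightarrow> xs \<in> tree_V d h \<and> ys \<in> tree_V d h \<and>
     ((\<exists>c. ys = xs @ [c]) \<or> (\<exists>c. xs = ys @ [c]))"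

definition adjA :: "nat \<Rightarrow> nat \<Rightarrow> nat list \<Rightarrow> nat list \<Rightarrow> int" where
  "adjA d h i j = (if tree_adj d h i j then 1 else 0)"

definition Delta :: "nat \<Rightarrow> nat \<Rightarrow> nat list \<Rightarrow> nat list \<Rightarrow> int" where
  "Delta d h i j = (if i = j then int d else 0) - adjA d h i j"

definition ZV :: "nat \<Rightarrow> nat \<Rightarrow> (nat list \<Rightarrow> int) monoid" where
  "ZV d h = \<lparr>carrier = {f. \<forall>x. x \<notin> tree_V d h \<longrightarrow> f x = 0},
             monoid.mult = (\<lambda>f g x. f x + g x), one = (\<lambda>x. 0)\<rparr>"

definition Delta_row :: "nat \<Rightarrow> nat \<Rightarrow> nat list \<Rightarrow> (nat list \<Rightarrow> int)" where
  "Delta_row d h i = (\<lambda>j. if j \<in> tree_V d h then Delta d h i j else 0)"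

definition basis_x :: "nat list \<Rightarrow> (nat list \<Rightarrow> int)" where
  "basis_x i = (\<lambda>j. if j = i then 1 else 0)"

definition Lattice :: "nat \<Rightarrow> nat \<Rightarrow> (nat list \<Rightarrow> int) set" where
  "Lattice d h = generate (ZV d h) (Delta_row d h ` tree_V d h)"

definition Gdh :: "nat \<Rightarrow> nat \<Rightarrow> (nat list \<Rightarrow> int) set monoid" where
  "Gdh d h = ZV d h Mod Lattice d h"

definition xbar :: "nat \<Rightarrow> nat \<Rightarrow> nat list \<Rightarrow> (nat list \<Rightarrow> int) set" where
  "xbar d h i = Lattice d h #>\<^bsub>ZV d h\<^esub> basis_x i"

definition Gm :: "nat \<Rightarrow> nat \<Rightarrow> nat \<Rightarrow> (nat list \<Rightarrow> int) set set" where
  "Gm d h m = generate (Gdh d h) (xbar d h ` {i \<in> tree_V d h. length i \<le> m})"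

definition theta :: "nat \<Rightarrow> nat \<Rightarrow> nat" where
  "theta d m = ((d - 1) ^ m - 1) div (d - 2)"

end

theory Submission
  imports Defs "HOL-Library.Sublist"
begin

(* Let Z_l = theta(d, h+1-l) be a weight attached to depth l. As Z_{h+1} = 0 and
   d Z_l - (d-1) Z_{l+1} = Z_{l-1}, the vector w_c that equals Z_|v| at every vertex v of the
   subtree below a vertex c of depth n+1, and 0 elsewhere, satisfies
   Delta w_c = Z_n e_c - Z_{n+1} e_{parent c}.
   Pairing a lattice vector with w_c - w_c' for siblings c, c' therefore gives a multiple of Z_n;
   since Z_n and Z_{n+1} are coprime, a vector k supported in depth <= n+1 is congruent modulo
   Lambda to a vector supported in depth <= n only if k c = k c' (mod Z_n) for all siblings
   c, c' of depth n+1.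
   Conversely, under these congruences k is pushed into depth <= n by subtracting a combination
   of the vectors Delta w_c and of the rows of Delta at depth n.
   Hence G_{n+1}/G_n is isomorphic to (Z/Z_n)^S, where S consists of the vertices of depth n+1
   other than the first child of their parent; |S| = d-1 for n = 0 and (d-2) d (d-1)^{n-1}
   otherwise. *)

section \<open>The numbers theta and the depth weights\<close>

lemma nat_power_diff_1_eq:
  fixes x :: nat
  shows "x ^ m - 1 = (x - 1) * (\<Sum>i<m. x ^ i)"
proof (cases "x = 0")
  case False
  then have "int (x ^ m - 1) = int x ^ m - 1"
    by (simp add: of_nat_diff Suc_leI)
  also have "\<dots> = (int x - 1) * (\<Sum>i<m. int x ^ i)"
    by (rule power_diff_1_eq)
  also have "\<dots> = int ((x - 1) * (\<Sum>i<m. x ^ i))"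
    using False by (simp add: of_nat_diff)
  finally show ?thesis
    by (simp only: of_nat_eq_iff)
qed (cases m, simp_all)

lemma theta_eq_sum:
  assumes "d \<ge> 3"
  shows "theta d m = (\<Sum>i<m. (d - 1) ^ i)"
proof -
  have "(d - 1) ^ m - 1 = (d - 2) * (\<Sum>i<m. (d - 1) ^ i)"
    using nat_power_diff_1_eq[of "d - 1" m] by (simp add: numeral_2_eq_2)
  then show ?thesis
    using assms by (simp add: theta_def)
qed

lemma theta_0 [simp]: "theta d 0 = 0"
  by (simp add: theta_def)

lemma theta_Suc:
  assumes "d \<ge> 3"
  shows "theta d (Suc m) = (d - 1) * theta d m + 1"
proof -
  have "(\<Sum>i<Suc m. (d - 1) ^ i) = 1 + (d - 1) * (\<Sum>i<m. (d - 1) ^ i)"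
    by (simp only: sum.lessThan_Suc_shift power_Suc sum_distrib_left power_0)
  then show ?thesis
    using assms by (simp add: theta_eq_sum)
qed

definition depth_weight :: "nat \<Rightarrow> nat \<Rightarrow> nat \<Rightarrow> int" where
  "depth_weight d h l = int (theta d (h + 1 - l))"

lemma depth_weight_leaf [simp]: "depth_weight d h (Suc h) = 0"
  by (simp add: depth_weight_def)

lemma depth_weight_eq_next:
  assumes "d \<ge> 3" and "l \<le> h"
  shows "depth_weight d h l = (int d - 1) * depth_weight d h (Suc l) + 1"
proof -
  have "h + 1 - l = Suc (h + 1 - Suc l)"
    using assms(2) by simp
  then show ?thesis
    using assms(1) by (simp add: depth_weight_def theta_Suc of_nat_diff)
qed

lemma depth_weight_recurrence:
  assumes "d \<ge> 3" and "1 \<le> l" and "l \<le> h"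
  shows "int d * depth_weight d h l - (int d - 1) * depth_weight d h (Suc l) = depth_weight d h (l - 1)"
proof -
  have prev: "depth_weight d h (l - 1) = (int d - 1) * depth_weight d h l + 1"
    using depth_weight_eq_next[OF assms(1), of "l - 1" h] assms(2,3) by simp
  have "(int d - 1) * depth_weight d h (Suc l) = depth_weight d h l - 1"
    using depth_weight_eq_next[OF assms(1,3)] by simp
  then show ?thesis
    unfolding prev by (simp add: algebra_simps)
qed

lemma coprime_depth_weight_Suc:
  assumes "d \<ge> 3" and "l \<le> h"
  shows "coprime (depth_weight d h l) (depth_weight d h (Suc l))"
proof -
  have "coprime ((int d - 1) * depth_weight d h (Suc l)) ((int d - 1) * depth_weight d h (Suc l) + 1)"
    by (rule coprime_add_one_right)
  then have "coprime (depth_weight d h (Suc l)) ((int d - 1) * depth_weight d h (Suc l) + 1)"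
    by (simp only: coprime_mult_left_iff)
  then show ?thesis
    unfolding depth_weight_eq_next[OF assms] by (simp only: coprime_commute)
qed

lemma depth_weight_pos:
  assumes "d \<ge> 3" and "l \<le> h"
  shows "depth_weight d h l > 0"
proof -
  have "depth_weight d h (Suc l) \<ge> 0"
    by (simp add: depth_weight_def)
  then show ?thesis
    unfolding depth_weight_eq_next[OF assms] using assms(1) by simp
qed

section \<open>The tree and its Laplacian\<close>

abbreviation branching :: "nat \<Rightarrow> nat list \<Rightarrow> nat" where
  "branching d y \<equiv> if y = [] then d else d - 1"

lemma tree_V_Nil [simp]: "[] \<in> tree_V d h"
  by (simp add: tree_V_def)

lemma tree_V_Cons:
  "a # ys \<in> tree_V d h \<longleftrightarrow> length ys < h \<and> a < d \<and> (\<forall>b\<in>set ys. b < d - 1)"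
  by (auto simp: tree_V_def)

lemma tree_V_snoc:
  "y @ [b] \<in> tree_V d h \<longleftrightarrow> y \<in> tree_V d h \<and> length y < h \<and> b < branching d y"
  by (cases y) (auto simp: tree_V_def)

lemma tree_V_butlast: "y \<in> tree_V d h \<Longrightarrow> butlast y \<in> tree_V d h"
  by (cases y rule: rev_cases) (simp_all add: tree_V_snoc)

lemma tree_V_length_le: "y \<in> tree_V d h \<Longrightarrow> length y \<le> h"
  by (simp add: tree_V_def)

lemma finite_tree_V: "finite (tree_V d h)"
proof (rule finite_subset)
  show "tree_V d h \<subseteq> {xs. set xs \<subseteq> {..<d} \<and> length xs \<le> h}"
  proof
    fix xs assume "xs \<in> tree_V d h"
    then show "xs \<in> {xs. set xs \<subseteq> {..<d} \<and> length xs \<le> h}"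
      by (cases xs) (auto simp: tree_V_def)
  qed
  show "finite {xs. set xs \<subseteq> {..<d} \<and> length xs \<le> h}"
    by (rule finite_lists_length_le) simp
qed

lemma Delta_sym: "Delta d h x y = Delta d h y x"
  by (auto simp: Delta_def adjA_def tree_adj_def)

lemma Delta_row_sym:
  "x \<in> tree_V d h \<Longrightarrow> y \<in> tree_V d h \<Longrightarrow> Delta_row d h x y = Delta_row d h y x"
  by (simp add: Delta_row_def Delta_sym)

lemma tree_neighbours:
  assumes "y \<in> tree_V d h"
  shows "{w \<in> tree_V d h. tree_adj d h y w} =
    (if y = [] then {} else {butlast y}) \<union>
    (if length y < h then (\<lambda>b. y @ [b]) ` {..<branching d y} else {})"
proof (cases "y = []")
  case True
  then show ?thesis
    using tree_V_snoc[of "[]" _ d h] by (auto simp: tree_adj_def)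
next
  case False
  then have "\<exists>c. y = butlast y @ [c]"
    by (metis append_butlast_last_id)
  then show ?thesis
    using assms False tree_V_butlast[OF assms] by (auto simp: tree_adj_def tree_V_snoc)
qed

definition Delta_vec :: "nat \<Rightarrow> nat \<Rightarrow> (nat list \<Rightarrow> int) \<Rightarrow> nat list \<Rightarrow> int" where
  "Delta_vec d h a = (\<lambda>y. \<Sum>w\<in>tree_V d h. a w * Delta_row d h w y)"

lemma Delta_vec_eq:
  assumes y: "y \<in> tree_V d h"
  shows "Delta_vec d h a y = int d * a y - (if y = [] then 0 else a (butlast y))
    - (if length y < h then (\<Sum>b<branching d y. a (y @ [b])) else 0)"
proof -
  let ?V = "tree_V d h"
  let ?N = "{w \<in> ?V. tree_adj d h y w}"
  have "Delta_vec d h a y = (\<Sum>w\<in>?V. if w = y then int d * a w else 0) - (\<Sum>w\<in>?N. a w)"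
    unfolding Delta_vec_def sum.inter_filter[OF finite_tree_V] sum_subtractf[symmetric]
    using y by (intro sum.cong) (auto simp: Delta_row_def Delta_def adjA_def tree_adj_def)
  also have "(\<Sum>w\<in>?V. if w = y then int d * a w else 0) = int d * a y"
    using y by (simp add: finite_tree_V)
  also have "(\<Sum>w\<in>?N. a w) = (if y = [] then 0 else a (butlast y))
      + (if length y < h then (\<Sum>b<branching d y. a (y @ [b])) else 0)"
  proof -
    have disjoint: "(if y = [] then {} else {butlast y}) \<inter>
        (if length y < h then (\<lambda>b. y @ [b]) ` {..<branching d y} else {}) = {}"
      by (auto dest!: arg_cong[where f = length])
    have "inj_on (\<lambda>b. y @ [b]) {..<branching d y}"
      by (auto simp: inj_on_def)
    then show ?thesis
      unfolding tree_neighbours[OF y] by (simp add: sum.union_disjoint[OF _ _ disjoint] sum.reindex)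
  qed
  finally show ?thesis
    by simp
qed

section \<open>The group Z^V and the lattice\<close>

lemma ZV_carrier_iff: "f \<in> carrier (ZV d h) \<longleftrightarrow> (\<forall>x. x \<notin> tree_V d h \<longrightarrow> f x = 0)"
  by (simp add: ZV_def)

lemma ZV_mult [simp]: "f \<otimes>\<^bsub>ZV d h\<^esub> g = (\<lambda>x. f x + g x)"
  by (simp add: ZV_def)

lemma ZV_one [simp]: "\<one>\<^bsub>ZV d h\<^esub> = (\<lambda>x. 0)"
  by (simp add: ZV_def)

lemma comm_group_ZV: "comm_group (ZV d h)"
proof (rule comm_groupI)
  fix f assume "f \<in> carrier (ZV d h)"
  then show "\<exists>g\<in>carrier (ZV d h). g \<otimes>\<^bsub>ZV d h\<^esub> f = \<one>\<^bsub>ZV d h\<^esub>"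
    by (intro bexI[of _ "\<lambda>x. - f x"]) (auto simp: ZV_carrier_iff)
qed (auto simp: ZV_carrier_iff)

lemma group_ZV: "group (ZV d h)"
  using comm_group_ZV by (rule comm_group.axioms(2))

lemma ZV_inv: "f \<in> carrier (ZV d h) \<Longrightarrow> inv\<^bsub>ZV d h\<^esub> f = (\<lambda>x. - f x)"
  by (rule group.inv_equality[OF group_ZV]) (auto simp: ZV_carrier_iff)

lemma ZV_nat_pow: "f [^]\<^bsub>ZV d h\<^esub> (n :: nat) = (\<lambda>x. int n * f x)"
  by (induction n) (simp_all add: algebra_simps)

lemma ZV_int_pow:
  assumes "f \<in> carrier (ZV d h)"
  shows "f [^]\<^bsub>ZV d h\<^esub> (k :: int) = (\<lambda>x. k * f x)"
  using assms by (simp add: int_pow_def2 ZV_nat_pow ZV_inv ZV_carrier_iff)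

lemma subgroup_ZV_diff_closed:
  assumes "subgroup H (ZV d h)" and "f \<in> H" and "g \<in> H"
  shows "(\<lambda>x. f x - g x) \<in> H"
proof -
  have "f \<otimes>\<^bsub>ZV d h\<^esub> inv\<^bsub>ZV d h\<^esub> g \<in> H"
    by (rule subgroup.m_closed[OF assms(1,2) subgroup.m_inv_closed[OF assms(1,3)]])
  then show ?thesis
    using subgroup.mem_carrier[OF assms(1,3)] by (simp add: ZV_inv)
qed

lemma subgroup_ZV_lincomb_closed:
  assumes H: "subgroup H (ZV d h)" and "finite I" and "u ` I \<subseteq> H"
  shows "(\<lambda>x. \<Sum>i\<in>I. k i * u i x) \<in> H"
  using assms(2,3)
proof (induction I rule: finite_induct)
  case empty
  then show ?case
    using subgroup.one_closed[OF H] by simp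
next
  case (insert i I)
  have "u i [^]\<^bsub>ZV d h\<^esub> k i \<in> H"
    using insert.prems by (simp add: group.subgroup_int_pow_closed[OF group_ZV H])
  then have "(\<lambda>x. k i * u i x) \<in> H"
    using insert.prems subgroup.mem_carrier[OF H] by (simp add: ZV_int_pow)
  then show ?case
    using insert subgroup.m_closed[OF H] by simp
qed

lemma subgroup_Lattice: "subgroup (Lattice d h) (ZV d h)"
  unfolding Lattice_def
  by (rule group.generate_is_subgroup[OF group_ZV]) (auto simp: Delta_row_def ZV_carrier_iff)

lemma Delta_row_in_Lattice: "w \<in> tree_V d h \<Longrightarrow> Delta_row d h w \<in> Lattice d h"
  unfolding Lattice_def by (rule generate.incl) simp

lemma Delta_vec_in_Lattice: "Delta_vec d h a \<in> Lattice d h"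
  unfolding Delta_vec_def
  by (rule subgroup_ZV_lincomb_closed[OF subgroup_Lattice finite_tree_V]) (auto simp: Delta_row_in_Lattice)

lemma Lattice_pairing_dvd:
  assumes rows: "\<And>x. x \<in> tree_V d h \<Longrightarrow> t dvd (\<Sum>w\<in>tree_V d h. u w * Delta_row d h x w)"
    and "f \<in> Lattice d h"
  shows "t dvd (\<Sum>w\<in>tree_V d h. u w * f w)"
  using assms(2) unfolding Lattice_def
proof (induction f rule: generate.induct)
  case one
  then show ?case
    by simp
next
  case (incl g)
  then show ?case
    using rows by auto
next
  case (inv g)
  then obtain x where "x \<in> tree_V d h" and "g = Delta_row d h x"
    by auto
  then show ?case
    using rows by (simp add: ZV_inv Delta_row_def ZV_carrier_iff sum_negf)
next
  case (eng g1 g2)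
  then show ?case
    by (simp add: distrib_left sum.distrib)
qed

abbreviation proj :: "nat \<Rightarrow> nat \<Rightarrow> (nat list \<Rightarrow> int) \<Rightarrow> (nat list \<Rightarrow> int) set" where
  "proj d h f \<equiv> Lattice d h #>\<^bsub>ZV d h\<^esub> f"

lemma group_hom_proj: "group_hom (ZV d h) (Gdh d h) (proj d h)"
proof -
  have "Lattice d h \<lhd> ZV d h"
    by (rule comm_group.subgroup_imp_normal[OF comm_group_ZV subgroup_Lattice])
  then show ?thesis
    unfolding Gdh_def
    by (simp add: group_hom_def group_hom_axioms_def group_ZV normal.factorgroup_is_group
        normal.r_coset_hom_Mod)
qed

lemma (in group) rcos_eq_iff:
  assumes "subgroup H G" and "a \<in> carrier G" and "b \<in> carrier G"
  shows "H #> a = H #> b \<longleftrightarrow> a \<otimes> inv b \<in> H"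
  using assms repr_independence[of a H b] rcos_self[of a H] subgroup.rcos_module[OF assms(1) is_group]
  by metis

lemma proj_eq_iff:
  assumes "f \<in> carrier (ZV d h)" and "g \<in> carrier (ZV d h)"
  shows "proj d h f = proj d h g \<longleftrightarrow> (\<lambda>x. f x - g x) \<in> Lattice d h"
  using group.rcos_eq_iff[OF group_ZV subgroup_Lattice assms] assms(2) by (simp add: ZV_inv)

definition ZV_upto :: "nat \<Rightarrow> nat \<Rightarrow> nat \<Rightarrow> (nat list \<Rightarrow> int) set" where
  "ZV_upto d h m = {f \<in> carrier (ZV d h). \<forall>x. m < length x \<longrightarrow> f x = 0}"

lemma ZV_upto_carrier: "f \<in> ZV_upto d h m \<Longrightarrow> f \<in> carrier (ZV d h)"
  by (simp add: ZV_upto_def)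

lemma subgroup_ZV_upto: "subgroup (ZV_upto d h m) (ZV d h)"
  by (rule group.subgroupI[OF group_ZV]) (auto simp: ZV_upto_def ZV_carrier_iff ZV_inv)

lemma ZV_upto_eq_generate:
  "ZV_upto d h m = generate (ZV d h) (basis_x ` {i \<in> tree_V d h. length i \<le> m})"
  (is "_ = generate _ (basis_x ` ?B)")
proof
  show "generate (ZV d h) (basis_x ` ?B) \<subseteq> ZV_upto d h m"
    by (rule group.generate_subgroup_incl[OF group_ZV _ subgroup_ZV_upto])
      (auto simp: ZV_upto_def ZV_carrier_iff basis_x_def)
  show "ZV_upto d h m \<subseteq> generate (ZV d h) (basis_x ` ?B)"
  proof
    fix f assume f: "f \<in> ZV_upto d h m"
    have "subgroup (generate (ZV d h) (basis_x ` ?B)) (ZV d h)"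
      by (rule group.generate_is_subgroup[OF group_ZV]) (auto simp: ZV_carrier_iff basis_x_def)
    then have "(\<lambda>x. \<Sum>i\<in>?B. f i * basis_x i x) \<in> generate (ZV d h) (basis_x ` ?B)"
      by (rule subgroup_ZV_lincomb_closed) (auto simp: finite_tree_V intro: generate.incl)
    moreover have "(\<Sum>i\<in>?B. f i * basis_x i x) = f x" for x
    proof -
      have "(\<Sum>i\<in>?B. f i * basis_x i x) = (\<Sum>i\<in>?B. if x = i then f i else 0)"
        by (intro sum.cong) (simp_all add: basis_x_def)
      then show ?thesis
        using f by (auto simp: ZV_upto_def ZV_carrier_iff finite_tree_V)
    qed
    ultimately show "f \<in> generate (ZV d h) (basis_x ` ?B)"
      by simp
  qed
qed

lemma Gm_eq_proj_image: "Gm d h m = proj d h ` ZV_upto d h m"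
proof -
  let ?B = "{i \<in> tree_V d h. length i \<le> m}"
  have "xbar d h ` ?B = proj d h ` basis_x ` ?B"
    by (simp add: xbar_def image_image)
  moreover have "basis_x ` ?B \<subseteq> carrier (ZV d h)"
    by (auto simp: ZV_carrier_iff basis_x_def)
  ultimately show ?thesis
    by (simp add: Gm_def ZV_upto_eq_generate group_hom.generate_img[OF group_hom_proj])
qed

section \<open>Subtree weights\<close>

definition tree_level :: "nat \<Rightarrow> nat \<Rightarrow> nat \<Rightarrow> nat list set" where
  "tree_level d h k = {v \<in> tree_V d h. length v = k}"

lemma first_sibling_in_tree_level:
  assumes "d \<ge> 2" and "c \<in> tree_level d h (Suc n)"
  shows "butlast c @ [0] \<in> tree_level d h (Suc n)"
proof -
  have "c \<noteq> []"
    using assms(2) by (auto simp: tree_level_def)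
  then have "c = butlast c @ [last c]"
    by simp
  then show ?thesis
    using assms tree_V_snoc[of "butlast c" "last c" d h] by (simp add: tree_level_def tree_V_snoc)
qed

definition subtree_weight :: "nat \<Rightarrow> nat \<Rightarrow> nat list \<Rightarrow> nat list \<Rightarrow> int" where
  "subtree_weight d h c w = (if prefix c w then depth_weight d h (length w) else 0)"

lemma Delta_vec_subtree_weight_inside:
  assumes d: "d \<ge> 3" and c: "length c = Suc n" and y: "y \<in> tree_V d h" and "prefix c y"
  shows "Delta_vec d h (subtree_weight d h c) y = (if y = c then depth_weight d h n else 0)"
proof -
  define l where "l = length y"
  have "y \<noteq> []" and "Suc n \<le> l" and "l \<le> h"
    using c prefix_length_le[OF \<open>prefix c y\<close>] tree_V_length_le[OF y] by (auto simp: l_def)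
  have parent: "(if y = [] then 0 else subtree_weight d h c (butlast y))
      = (if y = c then 0 else depth_weight d h (l - 1))"
  proof -
    have "prefix c (butlast y) \<longleftrightarrow> y \<noteq> c"
      using \<open>prefix c y\<close> prefix_snoc[of c "butlast y" "last y"] \<open>y \<noteq> []\<close>
        prefix_length_le[of c "butlast y"] c by (auto simp: l_def)
    then show ?thesis
      using \<open>y \<noteq> []\<close> by (simp add: subtree_weight_def l_def)
  qed
  have children: "(if l < h then (\<Sum>b<branching d y. subtree_weight d h c (y @ [b])) else 0)
      = (int d - 1) * depth_weight d h (Suc l)"
  proof (cases "l < h")
    case True
    have "(\<Sum>b<branching d y. subtree_weight d h c (y @ [b])) = (\<Sum>b<d - 1. depth_weight d h (Suc l))"
      using \<open>prefix c y\<close> \<open>y \<noteq> []\<close> by (simp add: subtree_weight_def l_def)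
    then show ?thesis
      using True d by (simp add: of_nat_diff)
  next
    case False
    then show ?thesis
      using \<open>l \<le> h\<close> by simp
  qed
  have "Delta_vec d h (subtree_weight d h c) y
      = int d * depth_weight d h l - (if y = c then 0 else depth_weight d h (l - 1))
        - (int d - 1) * depth_weight d h (Suc l)"
    using Delta_vec_eq[OF y, of "subtree_weight d h c"] parent children \<open>prefix c y\<close>
    by (simp add: subtree_weight_def l_def)
  also have "\<dots> = (if y = c then depth_weight d h (l - 1) else 0)"
    using depth_weight_recurrence[OF d, of l h] \<open>Suc n \<le> l\<close> \<open>l \<le> h\<close> by simp
  finally show ?thesis
    using c by (simp add: l_def)
qed

lemma Delta_vec_subtree_weight_outside:
  assumes c: "c \<in> tree_V d h" "length c = Suc n" and y: "y \<in> tree_V d h" and "\<not> prefix c y"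
  shows "Delta_vec d h (subtree_weight d h c) y = (if y = butlast c then - depth_weight d h (Suc n) else 0)"
proof -
  have "\<not> prefix c (butlast y)"
    using \<open>\<not> prefix c y\<close> prefix_order.trans[OF _ prefixeq_butlast] by blast
  then have parent: "(if y = [] then 0 else subtree_weight d h c (butlast y)) = 0"
    by (simp add: subtree_weight_def)
  have child: "subtree_weight d h c (y @ [b]) = (if c = y @ [b] then depth_weight d h (Suc n) else 0)" for b
    using \<open>\<not> prefix c y\<close> c(2) by (auto simp: subtree_weight_def)
  have children: "(if length y < h then (\<Sum>b<branching d y. subtree_weight d h c (y @ [b])) else 0)
      = (if y = butlast c then depth_weight d h (Suc n) else 0)"
  proof (cases "y = butlast c")
    case True
    then have "c = y @ [last c]"
      using c(2) by (cases c rule: rev_cases) auto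
    then have "length y < h" and "last c < branching d y"
      using c(1) tree_V_snoc by metis+
    have "(\<Sum>b<branching d y. subtree_weight d h c (y @ [b]))
        = (\<Sum>b<branching d y. if b = last c then depth_weight d h (Suc n) else 0)"
      using \<open>c = y @ [last c]\<close> by (intro sum.cong) (auto simp: child)
    then show ?thesis
      using True \<open>length y < h\<close> \<open>last c < branching d y\<close> by simp
  next
    case False
    then have "c \<noteq> y @ [b]" for b
      by auto
    then show ?thesis
      using False by (simp add: child)
  qed
  show ?thesis
    using Delta_vec_eq[OF y, of "subtree_weight d h c"] parent children \<open>\<not> prefix c y\<close>
    by (simp add: subtree_weight_def)
qed

lemma Delta_vec_subtree_weight:
  assumes "d \<ge> 3" and c: "c \<in> tree_level d h (Suc n)" and y: "y \<in> tree_V d h"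
  shows "Delta_vec d h (subtree_weight d h c) y =
    (if y = c then depth_weight d h n else if y = butlast c then - depth_weight d h (Suc n) else 0)"
proof (cases "prefix c y")
  case True
  moreover have "y \<noteq> butlast c"
    using prefix_length_le[OF True] c by (auto simp: tree_level_def)
  ultimately show ?thesis
    using Delta_vec_subtree_weight_inside[OF assms(1) _ y] c by (simp add: tree_level_def)
next
  case False
  then show ?thesis
    using Delta_vec_subtree_weight_outside[OF _ _ y] c by (auto simp: tree_level_def)
qed

lemma pairing_subtree_weight:
  assumes c: "c \<in> tree_level d h (Suc n)" and g: "g \<in> ZV_upto d h (Suc n)"
  shows "(\<Sum>w\<in>tree_V d h. subtree_weight d h c w * g w) = depth_weight d h (Suc n) * g c"
proof -
  have "subtree_weight d h c w * g w = (if w = c then depth_weight d h (Suc n) * g c else 0)" for w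
  proof -
    have "g w = 0" if "prefix c w" and "w \<noteq> c"
      using prefix_length_less[of c w] that g c by (auto simp: ZV_upto_def tree_level_def)
    then show ?thesis
      using c by (auto simp: subtree_weight_def tree_level_def)
  qed
  then show ?thesis
    using c by (simp add: finite_tree_V tree_level_def)
qed

lemma Delta_row_lower:
  assumes "v \<in> tree_V d h" and "y \<in> tree_V d h" and "length v < length y"
  shows "Delta_row d h v y = (if butlast y = v then -1 else 0)"
proof -
  have "tree_adj d h v y \<longleftrightarrow> butlast y = v"
    using assms by (cases y rule: rev_cases) (auto simp: tree_adj_def)
  then show ?thesis
    using assms by (auto simp: Delta_row_def Delta_def adjA_def)
qed

lemma lattice_combination_below_level:
  assumes "d \<ge> 3" and y: "y \<in> tree_V d h" and "n < length y"
  shows "(\<Sum>c\<in>tree_level d h (Suc n). q c * Delta_vec d h (subtree_weight d h c) y)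
      - (\<Sum>v\<in>tree_level d h n. t v * Delta_row d h v y)
    = (if length y = Suc n then q y * depth_weight d h n + t (butlast y) else 0)"
proof -
  have "(\<Sum>c\<in>tree_level d h (Suc n). q c * Delta_vec d h (subtree_weight d h c) y)
      = (\<Sum>c\<in>tree_level d h (Suc n). if y = c then q c * depth_weight d h n else 0)"
    using Delta_vec_subtree_weight[OF assms(1) _ y] \<open>n < length y\<close>
    by (intro sum.cong) (auto simp: tree_level_def)
  also have "\<dots> = (if length y = Suc n then q y * depth_weight d h n else 0)"
    using y by (simp add: finite_tree_V tree_level_def)
  finally have children: "(\<Sum>c\<in>tree_level d h (Suc n). q c * Delta_vec d h (subtree_weight d h c) y)
      = (if length y = Suc n then q y * depth_weight d h n else 0)" .
  have "(\<Sum>v\<in>tree_level d h n. t v * Delta_row d h v y)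
      = (\<Sum>v\<in>tree_level d h n. if butlast y = v then - t v else 0)"
    using Delta_row_lower[OF _ y] \<open>n < length y\<close> by (intro sum.cong) (auto simp: tree_level_def)
  also have "\<dots> = (if length y = Suc n then - t (butlast y) else 0)"
    using tree_V_butlast[OF y] \<open>n < length y\<close> by (auto simp: finite_tree_V tree_level_def)
  finally show ?thesis
    using children by simp
qed

lemma first_sibling_dvd_of_mod_Lattice:
  assumes d: "d \<ge> 3" and k: "k \<in> ZV_upto d h (Suc n)" and e: "e \<in> ZV_upto d h n"
    and L: "(\<lambda>x. k x - e x) \<in> Lattice d h" and c: "c \<in> tree_level d h (Suc n)"
  shows "depth_weight d h n dvd k c - k (butlast c @ [0])"
proof -
  define c' where "c' = butlast c @ [0]"
  have c': "c' \<in> tree_level d h (Suc n)"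
    unfolding c'_def using d by (intro first_sibling_in_tree_level[OF _ c]) simp
  have "length c = Suc n" and "length c' = Suc n" and "length (butlast c) = n"
    using c c' by (simp_all add: tree_level_def)
  then have parents: "butlast c' = butlast c" "c \<noteq> butlast c" "c' \<noteq> butlast c"
    by (simp add: c'_def, metis n_not_Suc_n, metis n_not_Suc_n)
  define u where "u w = subtree_weight d h c w - subtree_weight d h c' w" for w
  have "depth_weight d h n dvd (\<Sum>w\<in>tree_V d h. u w * Delta_row d h x w)" if x: "x \<in> tree_V d h" for x
  proof -
    have "(\<Sum>w\<in>tree_V d h. u w * Delta_row d h x w)
        = Delta_vec d h (subtree_weight d h c) x - Delta_vec d h (subtree_weight d h c') x"
      unfolding Delta_vec_def sum_subtractf[symmetric] u_def
      using x Delta_row_sym by (intro sum.cong) (auto simp: left_diff_distrib)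
    also have "\<dots> = (if x = c then depth_weight d h n else 0) - (if x = c' then depth_weight d h n else 0)"
      using Delta_vec_subtree_weight[OF d c x] Delta_vec_subtree_weight[OF d c' x] parents
      by auto
    finally show ?thesis
      by simp
  qed
  then have "depth_weight d h n dvd (\<Sum>w\<in>tree_V d h. u w * (k w - e w))"
    using Lattice_pairing_dvd[OF _ L] by blast
  moreover have "(\<Sum>w\<in>tree_V d h. u w * (k w - e w)) = depth_weight d h (Suc n) * (k c - k c')"
  proof -
    have ke: "(\<lambda>x. k x - e x) \<in> ZV_upto d h (Suc n)"
      using k e by (auto simp: ZV_upto_def ZV_carrier_iff)
    have "e c = 0" and "e c' = 0"
      using e c c' by (auto simp: ZV_upto_def tree_level_def)
    have "(\<Sum>w\<in>tree_V d h. u w * (k w - e w))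
        = (\<Sum>w\<in>tree_V d h. subtree_weight d h c w * (k w - e w))
          - (\<Sum>w\<in>tree_V d h. subtree_weight d h c' w * (k w - e w))"
      unfolding u_def left_diff_distrib by (rule sum_subtractf)
    also have "\<dots> = depth_weight d h (Suc n) * (k c - e c) - depth_weight d h (Suc n) * (k c' - e c')"
      using pairing_subtree_weight[OF c ke] pairing_subtree_weight[OF c' ke] by simp
    finally show ?thesis
      using \<open>e c = 0\<close> \<open>e c' = 0\<close> by (simp add: right_diff_distrib)
  qed
  ultimately have "depth_weight d h n dvd depth_weight d h (Suc n) * (k c - k c')"
    by simp
  moreover have "coprime (depth_weight d h n) (depth_weight d h (Suc n))"
    using c tree_V_length_le[of c d h] by (intro coprime_depth_weight_Suc[OF d]) (auto simp: tree_level_def)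
  ultimately show ?thesis
    by (simp add: c'_def coprime_dvd_mult_right_iff)
qed

lemma mod_Lattice_of_first_sibling_dvd:
  assumes d: "d \<ge> 3" and k: "k \<in> ZV_upto d h (Suc n)"
    and dvd: "\<And>c. c \<in> tree_level d h (Suc n) \<Longrightarrow> depth_weight d h n dvd k c - k (butlast c @ [0])"
  shows "\<exists>e\<in>ZV_upto d h n. (\<lambda>x. k x - e x) \<in> Lattice d h"
proof -
  define q where "q c = (k c - k (butlast c @ [0])) div depth_weight d h n" for c
  define L where "L y = (\<Sum>c\<in>tree_level d h (Suc n). q c * Delta_vec d h (subtree_weight d h c) y)
      - (\<Sum>v\<in>tree_level d h n. k (v @ [0]) * Delta_row d h v y)" for y
  have L_Lattice: "L \<in> Lattice d h"
    unfolding L_def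
    by (intro subgroup_ZV_diff_closed[OF subgroup_Lattice] subgroup_ZV_lincomb_closed[OF subgroup_Lattice])
      (auto simp: finite_tree_V tree_level_def Delta_vec_in_Lattice Delta_row_in_Lattice)
  have agree: "L y = k y" if "n < length y" for y
  proof (cases "y \<in> tree_V d h")
    case True
    have L_y: "L y = (if length y = Suc n then q y * depth_weight d h n + k (butlast y @ [0]) else 0)"
      unfolding L_def by (rule lattice_combination_below_level[OF d True that])
    show ?thesis
    proof (cases "length y = Suc n")
      case True
      then have "q y * depth_weight d h n = k y - k (butlast y @ [0])"
        using dvd[of y] \<open>y \<in> tree_V d h\<close> by (simp add: q_def tree_level_def)
      then show ?thesis
        using L_y True by simp
    next
      case False
      then show ?thesis
        using L_y k that by (simp add: ZV_upto_def)
    qed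
  next
    case False
    then show ?thesis
      using k by (simp add: L_def ZV_upto_def ZV_carrier_iff Delta_vec_def Delta_row_def)
  qed
  have "L \<in> carrier (ZV d h)"
    using L_Lattice subgroup.mem_carrier[OF subgroup_Lattice] by blast
  then have "(\<lambda>y. k y - L y) \<in> ZV_upto d h n"
    using k agree by (simp add: ZV_upto_def ZV_carrier_iff)
  moreover have "(\<lambda>x. k x - (k x - L x)) \<in> Lattice d h"
    using L_Lattice by simp
  ultimately show ?thesis
    by (intro bexI[of _ "\<lambda>y. k y - L y"])
qed

section \<open>The quotient G_{n+1}/G_n\<close>

lemma mod_Lattice_iff_first_sibling_dvd:
  assumes "d \<ge> 3" and "k \<in> ZV_upto d h (Suc n)"
  shows "(\<exists>e\<in>ZV_upto d h n. (\<lambda>x. k x - e x) \<in> Lattice d h) \<longleftrightarrow>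
    (\<forall>c\<in>tree_level d h (Suc n). depth_weight d h n dvd k c - k (butlast c @ [0]))"
  using first_sibling_dvd_of_mod_Lattice[OF assms] mod_Lattice_of_first_sibling_dvd[OF assms] by blast

abbreviation level_coset :: "nat \<Rightarrow> nat \<Rightarrow> nat \<Rightarrow> (nat list \<Rightarrow> int) \<Rightarrow> (nat list \<Rightarrow> int) set set" where
  "level_coset d h n f \<equiv> Gm d h n #>\<^bsub>Gdh d h\<^esub> proj d h f"

lemma carrier_level_quotient:
  "carrier ((Gdh d h)\<lparr>carrier := Gm d h (Suc n)\<rparr> Mod Gm d h n) = level_coset d h n ` ZV_upto d h (Suc n)"
proof -
  have "carrier ((Gdh d h)\<lparr>carrier := Gm d h (Suc n)\<rparr> Mod Gm d h n)
      = (\<lambda>a. Gm d h n #>\<^bsub>Gdh d h\<^esub> a) ` Gm d h (Suc n)"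
    by (auto simp: FactGroup_def RCOSETS_def r_coset_def)
  then show ?thesis
    by (simp add: Gm_eq_proj_image[of d h "Suc n"] image_image)
qed

lemma level_coset_eq_iff:
  assumes d: "d \<ge> 3" and f: "f \<in> ZV_upto d h (Suc n)" and g: "g \<in> ZV_upto d h (Suc n)"
  shows "level_coset d h n f = level_coset d h n g \<longleftrightarrow>
    (\<forall>c\<in>tree_level d h (Suc n).
       depth_weight d h n dvd (f c - g c) - (f (butlast c @ [0]) - g (butlast c @ [0])))"
    (is "_ \<longleftrightarrow> ?siblings_dvd")
proof -
  interpret proj: group_hom "ZV d h" "Gdh d h" "proj d h"
    by (rule group_hom_proj)
  have fc: "f \<in> carrier (ZV d h)" and gc: "g \<in> carrier (ZV d h)"
    using f g by (simp_all add: ZV_upto_def)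
  have sub: "subgroup (Gm d h n) (Gdh d h)"
    unfolding Gm_eq_proj_image by (rule proj.subgroup_img_is_subgroup[OF subgroup_ZV_upto])
  have "proj d h f \<otimes>\<^bsub>Gdh d h\<^esub> inv\<^bsub>Gdh d h\<^esub> proj d h g
      = proj d h (f \<otimes>\<^bsub>ZV d h\<^esub> inv\<^bsub>ZV d h\<^esub> g)"
    using fc gc by (simp add: proj.hom_mult proj.hom_inv del: ZV_mult)
  also have "f \<otimes>\<^bsub>ZV d h\<^esub> inv\<^bsub>ZV d h\<^esub> g = (\<lambda>x. f x - g x)"
    using gc by (simp add: ZV_inv)
  finally have "level_coset d h n f = level_coset d h n g \<longleftrightarrow>
      (\<exists>e\<in>ZV_upto d h n. proj d h (\<lambda>x. f x - g x) = proj d h e)"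
    using proj.H.rcos_eq_iff[OF sub] fc gc by (auto simp: Gm_eq_proj_image)
  also have "\<dots> \<longleftrightarrow> (\<exists>e\<in>ZV_upto d h n. (\<lambda>x. (f x - g x) - e x) \<in> Lattice d h)"
  proof (rule bex_cong[OF refl])
    fix e assume "e \<in> ZV_upto d h n"
    moreover have "(\<lambda>x. f x - g x) \<in> carrier (ZV d h)"
      using fc gc by (simp add: ZV_carrier_iff)
    ultimately show "proj d h (\<lambda>x. f x - g x) = proj d h e \<longleftrightarrow> (\<lambda>x. (f x - g x) - e x) \<in> Lattice d h"
      by (simp add: proj_eq_iff ZV_upto_carrier)
  qed
  also have "\<dots> \<longleftrightarrow> ?siblings_dvd"
  proof -
    have "(\<lambda>x. f x - g x) \<in> ZV_upto d h (Suc n)"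
      using f g by (auto simp: ZV_upto_def ZV_carrier_iff)
    then show ?thesis
      using mod_Lattice_iff_first_sibling_dvd[OF d] by simp
  qed
  finally show ?thesis .
qed

definition nonfirst_level :: "nat \<Rightarrow> nat \<Rightarrow> nat \<Rightarrow> nat list set" where
  "nonfirst_level d h k = {c \<in> tree_level d h k. last c \<noteq> 0}"

definition residue_reps :: "nat \<Rightarrow> nat \<Rightarrow> nat \<Rightarrow> (nat list \<Rightarrow> int) set" where
  "residue_reps d h n = {g. (\<forall>x. x \<notin> nonfirst_level d h (Suc n) \<longrightarrow> g x = 0) \<and>
     (\<forall>x\<in>nonfirst_level d h (Suc n). 0 \<le> g x \<and> g x < depth_weight d h n)}"

lemma residue_reps_subset: "residue_reps d h n \<subseteq> ZV_upto d h (Suc n)"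
  by (auto simp: residue_reps_def nonfirst_level_def tree_level_def ZV_upto_def ZV_carrier_iff)

lemma first_sibling_eq: "c \<noteq> [] \<Longrightarrow> last c = 0 \<Longrightarrow> butlast c @ [0] = c"
  by (metis append_butlast_last_id)

lemma level_coset_residue_rep:
  assumes d: "d \<ge> 3" and "n < h" and f: "f \<in> ZV_upto d h (Suc n)"
  shows "\<exists>g\<in>residue_reps d h n. level_coset d h n f = level_coset d h n g"
proof -
  let ?S = "nonfirst_level d h (Suc n)" and ?t = "depth_weight d h n"
  define g where "g x = (if x \<in> ?S then (f x - f (butlast x @ [0])) mod ?t else 0)" for x
  have "?t > 0"
    using depth_weight_pos[OF d] \<open>n < h\<close> by simp
  then have g: "g \<in> residue_reps d h n"
    by (simp add: residue_reps_def g_def)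
  have "?t dvd (f c - g c) - (f (butlast c @ [0]) - g (butlast c @ [0]))"
    if c: "c \<in> tree_level d h (Suc n)" for c
  proof (cases "c \<in> ?S")
    case True
    then have "(f c - g c) - (f (butlast c @ [0]) - g (butlast c @ [0]))
        = (f c - f (butlast c @ [0])) - (f c - f (butlast c @ [0])) mod ?t"
      by (simp add: g_def nonfirst_level_def)
    then show ?thesis
      by (simp add: minus_mod_eq_mult_div)
  next
    case False
    then have "butlast c @ [0] = c"
      using c by (intro first_sibling_eq) (auto simp: nonfirst_level_def tree_level_def)
    then show ?thesis
      by simp
  qed
  then have "level_coset d h n f = level_coset d h n g"
    using level_coset_eq_iff[OF d f] g residue_reps_subset by blast
  then show ?thesis
    using g by blast
qed

lemma inj_on_level_coset_residue_reps:
  assumes d: "d \<ge> 3"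
  shows "inj_on (level_coset d h n) (residue_reps d h n)"
proof (rule inj_onI)
  fix g1 g2
  assume g1: "g1 \<in> residue_reps d h n" and g2: "g2 \<in> residue_reps d h n"
    and eq: "level_coset d h n g1 = level_coset d h n g2"
  have siblings_dvd: "\<forall>c\<in>tree_level d h (Suc n).
      depth_weight d h n dvd (g1 c - g2 c) - (g1 (butlast c @ [0]) - g2 (butlast c @ [0]))"
    using eq level_coset_eq_iff[OF d] g1 g2 residue_reps_subset by blast
  show "g1 = g2"
  proof
    fix x
    show "g1 x = g2 x"
    proof (cases "x \<in> nonfirst_level d h (Suc n)")
      case True
      then have "x \<in> tree_level d h (Suc n)"
        by (simp add: nonfirst_level_def)
      moreover have "g1 (butlast x @ [0]) = 0" and "g2 (butlast x @ [0]) = 0"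
        using g1 g2 by (simp_all add: residue_reps_def nonfirst_level_def)
      ultimately have "depth_weight d h n dvd g1 x - g2 x"
        using siblings_dvd by fastforce
      then have "g1 x mod depth_weight d h n = g2 x mod depth_weight d h n"
        by (simp add: mod_eq_dvd_iff)
      then show ?thesis
        using True g1 g2 by (simp add: residue_reps_def)
    next
      case False
      then show ?thesis
        using g1 g2 by (simp add: residue_reps_def)
    qed
  qed
qed

lemma card_supported_functions:
  assumes "finite S"
  shows "card {g. (\<forall>x. x \<notin> S \<longrightarrow> g x = z) \<and> (\<forall>x\<in>S. g x \<in> A)} = card A ^ card S"
proof -
  let ?G = "{g. (\<forall>x. x \<notin> S \<longrightarrow> g x = z) \<and> (\<forall>x\<in>S. g x \<in> A)}"
  have inj: "inj_on (\<lambda>g. restrict g S) ?G"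
  proof (rule inj_onI, rule ext)
    fix g1 g2 x
    assume "g1 \<in> ?G" and "g2 \<in> ?G" and "restrict g1 S = restrict g2 S"
    then show "g1 x = g2 x"
      by (cases "x \<in> S") (auto dest: fun_cong[of _ _ x])
  qed
  have image: "(\<lambda>g. restrict g S) ` ?G = (S \<rightarrow>\<^sub>E A)"
  proof
    show "(\<lambda>g. restrict g S) ` ?G \<subseteq> (S \<rightarrow>\<^sub>E A)"
      by auto
    show "(S \<rightarrow>\<^sub>E A) \<subseteq> (\<lambda>g. restrict g S) ` ?G"
    proof
      fix f assume f: "f \<in> S \<rightarrow>\<^sub>E A"
      then have "f = restrict (\<lambda>x. if x \<in> S then f x else z) S"
        by (simp add: fun_eq_iff PiE_iff extensional_def)
      moreover have "(\<lambda>x. if x \<in> S then f x else z) \<in> ?G"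
        using f by auto
      ultimately show "f \<in> (\<lambda>g. restrict g S) ` ?G"
        by (rule image_eqI)
    qed
  qed
  have "card ?G = card (S \<rightarrow>\<^sub>E A)"
    unfolding image[symmetric] by (rule card_image[OF inj, symmetric])
  also have "\<dots> = card A ^ card S"
    using assms by (simp add: card_PiE)
  finally show ?thesis .
qed

lemma finite_nonfirst_level: "finite (nonfirst_level d h k)"
  by (simp add: nonfirst_level_def tree_level_def finite_tree_V)

lemma card_residue_reps:
  "card (residue_reps d h n) = theta d (h + 1 - n) ^ card (nonfirst_level d h (Suc n))"
proof -
  have "residue_reps d h n = {g. (\<forall>x. x \<notin> nonfirst_level d h (Suc n) \<longrightarrow> g x = 0) \<and>
      (\<forall>x\<in>nonfirst_level d h (Suc n). g x \<in> {0..<depth_weight d h n})}"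
    by (auto simp: residue_reps_def)
  then show ?thesis
    by (simp only: card_supported_functions[OF finite_nonfirst_level]) (simp add: depth_weight_def)
qed

lemma order_level_quotient:
  assumes "d \<ge> 3" and "n < h"
  shows "order ((Gdh d h)\<lparr>carrier := Gm d h (Suc n)\<rparr> Mod Gm d h n) =
    theta d (h + 1 - n) ^ card (nonfirst_level d h (Suc n))"
proof -
  have "level_coset d h n ` ZV_upto d h (Suc n) = level_coset d h n ` residue_reps d h n"
  proof
    show "level_coset d h n ` ZV_upto d h (Suc n) \<subseteq> level_coset d h n ` residue_reps d h n"
      using level_coset_residue_rep[OF assms] by (auto simp: image_iff)
    show "level_coset d h n ` residue_reps d h n \<subseteq> level_coset d h n ` ZV_upto d h (Suc n)"
      using residue_reps_subset by (rule image_mono)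
  qed
  then have "order ((Gdh d h)\<lparr>carrier := Gm d h (Suc n)\<rparr> Mod Gm d h n) = card (residue_reps d h n)"
    using card_image[OF inj_on_level_coset_residue_reps[OF assms(1)]]
    by (simp add: order_def carrier_level_quotient)
  then show ?thesis
    by (simp add: card_residue_reps)
qed

lemma card_nonfirst_level_1:
  assumes "h \<ge> 1"
  shows "card (nonfirst_level d h 1) = d - 1"
proof -
  have "nonfirst_level d h 1 = (\<lambda>a. [a]) ` {1..<d}"
    using assms by (auto simp: nonfirst_level_def tree_level_def tree_V_def length_Suc_conv)
  moreover have "inj_on (\<lambda>a. [a]) {1..<d}"
    by (simp add: inj_on_def)
  ultimately show ?thesis
    by (simp add: card_image)
qed

lemma card_nonfirst_level_Suc:
  assumes "1 \<le> n" and "n < h"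
  shows "card (nonfirst_level d h (Suc n)) = (d - 2) * d * (d - 1) ^ (n - 1)"
proof -
  let ?L = "{ys. set ys \<subseteq> {..<d - 1} \<and> length ys = n - 1}"
  let ?F = "\<lambda>(a, ys, b). a # ys @ [b :: nat]"
  have "nonfirst_level d h (Suc n) = ?F ` ({..<d} \<times> ?L \<times> {1..<d - 1})"
  proof
    show "?F ` ({..<d} \<times> ?L \<times> {1..<d - 1}) \<subseteq> nonfirst_level d h (Suc n)"
      using assms by (auto simp: nonfirst_level_def tree_level_def tree_V_Cons)
    show "nonfirst_level d h (Suc n) \<subseteq> ?F ` ({..<d} \<times> ?L \<times> {1..<d - 1})"
    proof
      fix c assume c: "c \<in> nonfirst_level d h (Suc n)"
      then have "length c = Suc n"
        by (simp add: nonfirst_level_def tree_level_def)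
      then obtain a zs where "c = a # zs"
        by (cases c) auto
      moreover have "zs \<noteq> []"
        using \<open>length c = Suc n\<close> \<open>c = a # zs\<close> assms(1) by auto
      ultimately have c_eq: "c = a # butlast zs @ [last zs]"
        by simp
      then show "c \<in> ?F ` ({..<d} \<times> ?L \<times> {1..<d - 1})"
        using c by (intro image_eqI[of _ _ "(a, butlast zs, last zs)"])
          (auto simp: nonfirst_level_def tree_level_def tree_V_Cons simp del: append_butlast_last_id)
    qed
  qed
  moreover have "inj_on ?F ({..<d} \<times> ?L \<times> {1..<d - 1})"
    by (auto simp: inj_on_def)
  ultimately have "card (nonfirst_level d h (Suc n)) = d * ((d - 1) ^ (n - 1) * (d - 2))"
    by (simp add: card_image card_cartesian_product card_lists_length_eq numeral_2_eq_2)
  then show ?thesis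
    by (simp add: ac_simps)
qed

theorem lemma8p17:
  fixes d h n :: nat
  assumes "d \<ge> 3" and "h \<ge> 1" and "n \<le> h - 1"
  shows "order ((Gdh d h)\<lparr>carrier := Gm d h (Suc n)\<rparr> Mod Gm d h n) =
    (if n = 0 then theta d (h + 1) ^ (d - 1)
     else theta d (h + 1 - n) ^ ((d - 2) * d * (d - 1) ^ (n - 1)))"
proof -
  have "n < h"
    using assms(2,3) by simp
  then show ?thesis
    using order_level_quotient[OF assms(1)] card_nonfirst_level_1[OF assms(2)] card_nonfirst_level_Suc[of n h d]
    by simp
qed

end
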